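(* Let $\ell_1,\dots,\ell_T\in\{\theta_1,\theta_2\}$ with $T_1\ge1$ labels equal to $\theta_1$ and $T_2\ge1$ labels equal to $\theta_2$ ($T_1+T_2=T$). For a prior log-odds $\pi\in\mathbb R$ and an RBPSR $C_\rho$, consider minimizing $$J(w_1,\dots,w_T)=\sum_{t=1}^T w(\ell_t)\,C_\rho\bigl(\ell_t,\sigma(w_t+\pi)\bigr),\qquad w(\theta_1)=\frac{\sigma(\pi)}{T_1},\ w(\theta_2)=\frac{1-\sigma(\pi)}{T_2},$$ over $(w_1,\dots,w_T)$ in the extended reals subject to $-\infty\le w_1\le w_2\le\cdots\le w_T\le\infty$. Then this problem has the unique solution $$w_t=\operatorname{logit}\,\mathrm{PAV}_t\bigl((\ell_1,\dots,\ell_T),(1,1)\bigr)-\operatorname{logit}\frac{T_1}{T},\qquad t=1,\dots,T,$$ and this solution is simultaneously optimal for every RBPSR $C_\rho$ and every $\pi\in\mathbb R$.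
   Context: A regular binary proper scoring rule (RBPSR) is a function $C_\rho:\{\theta_1,\theta_2\}\times[0,1]\to[0,\infty]$ given by $C_\rho(\theta_1,q)=\int_q^1\frac{\rho(\eta)}{\eta}\,d\eta$ and $C_\rho(\theta_2,q)=\int_0^q\frac{\rho(\eta)}{1-\eta}\,d\eta$, where $\rho$ is a probability distribution on $[0,1]$ (possibly containing Dirac point masses), and these integrals are finite except that $C_\rho(\theta_1,0)$ and $C_\rho(\theta_2,1)$ may equal $\infty$. $\operatorname{logit}(p)=\log\frac{p}{1-p}$, a bijection from $[0,1]$ onto $[-\infty,\infty]$, with inverse $\sigma(w)=\frac{1}{1+e^{-w}}$ (with $\sigma(\pm\infty)\in\{0,1\}$). For weights $v_1,v_2>0$, $\mathrm{PAV}_t\bigl((\ell_1,\dots,\ell_T),(v_1,v_2)\bigr)=\max_{1\le i\le t}\min_{t\le j\le T}\frac{m_{i,j}v_1}{m_{i,j}v_1+n_{i,j}v_2}$, where $m_{i,j},n_{i,j}$ are the numbers of $\theta_1$- and $\theta_2$-labels among $\ell_i,\dots,\ell_j$.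
   Formalization: Uniqueness of the solution is claimed only for $\rho$ with $\rho$((a,b)) > 0 whenever 0 <= a < b <= 1; a point mass of $\rho$ at q enters $C_\rho(\theta_1,q)$ (over [q,1]) but not $C_\rho(\theta_2,q)$ (over [0,q)). Apart from conventions, each condition added here is assumed in the paper as well or is needed for the statement above to hold. *)

theory Defs
  imports "HOL-Probability.Probability"
begin

datatype label = Th1 | Th2

text \<open>A regular binary proper scoring rule is given by a probability distribution rho
  on [0,1] (a Borel probability measure on the reals concentrated on [0,1]).\<close>
definition rbpsr_dist :: "real measure \<Rightarrow> bool" where
  "rbpsr_dist rho \<longleftrightarrow> prob_space rho \<and> sets rho = sets borel \<and> emeasure rho {0..1} = 1"

text \<open>Point-mass convention: a mass at eta = q is charged to theta_1 (interval [q,1]) and not to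
  theta_2 (interval [0,q)).  Values in [0,\<infinity>]; 1/0 = \<infinity>.\<close>
definition Crho :: "real measure \<Rightarrow> label \<Rightarrow> real \<Rightarrow> ennreal" where
  "Crho rho l q = (case l of
      Th1 \<Rightarrow> (\<integral>\<^sup>+ eta. indicator {q..1} eta * inverse (ennreal eta) \<partial>rho)
    | Th2 \<Rightarrow> (\<integral>\<^sup>+ eta. indicator {0..<q} eta * inverse (ennreal (1 - eta)) \<partial>rho))"

definition sigm :: "ereal \<Rightarrow> real" where
  "sigm w = (case w of ereal r \<Rightarrow> 1 / (1 + exp (- r)) | PInfty \<Rightarrow> 1 | MInfty \<Rightarrow> 0)"

definition logit :: "real \<Rightarrow> ereal" where
  "logit p = (if p = 0 then - \<infinity> else if p = 1 then \<infinity> else ereal (ln (p / (1 - p))))"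

definition lweight :: "label list \<Rightarrow> real \<Rightarrow> label \<Rightarrow> real" where
  "lweight ls pr l = (case l of
      Th1 \<Rightarrow> sigm (ereal pr) / real (count_list ls Th1)
    | Th2 \<Rightarrow> (1 - sigm (ereal pr)) / real (count_list ls Th2))"

definition Jobj :: "real measure \<Rightarrow> real \<Rightarrow> label list \<Rightarrow> ereal list \<Rightarrow> ennreal" where
  "Jobj rho pr ls ws = (\<Sum>t<length ls.
      ennreal (lweight ls pr (ls ! t)) * Crho rho (ls ! t) (sigm (ws ! t + ereal pr)))"

definition feasible :: "nat \<Rightarrow> ereal list \<Rightarrow> bool" where
  "feasible T ws \<longleftrightarrow> length ws = T \<and> sorted ws"

definition is_minimizer :: "real measure \<Rightarrow> real \<Rightarrow> label list \<Rightarrow> ereal list \<Rightarrow> bool" where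
  "is_minimizer rho pr ls ws \<longleftrightarrow> feasible (length ls) ws \<and>
     (\<forall>ws'. feasible (length ls) ws' \<longrightarrow> Jobj rho pr ls ws \<le> Jobj rho pr ls ws')"

text \<open>PAV with 0-based indices: segment i..j (inclusive) is take (j-i+1) (drop i ls).\<close>
definition seg_ratio :: "label list \<Rightarrow> real \<Rightarrow> real \<Rightarrow> nat \<Rightarrow> nat \<Rightarrow> real" where
  "seg_ratio ls v1 v2 i j = (let s = take (Suc j - i) (drop i ls);
       m = real (count_list s Th1); n = real (count_list s Th2)
     in m * v1 / (m * v1 + n * v2))"

definition PAV :: "label list \<Rightarrow> real \<Rightarrow> real \<Rightarrow> nat \<Rightarrow> real" where
  "PAV ls v1 v2 t = Max ((\<lambda>i. Min ((\<lambda>j. seg_ratio ls v1 v2 i j) ` {t..<length ls})) ` {0..t})"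

definition pav_solution :: "label list \<Rightarrow> ereal list" where
  "pav_solution ls = map (\<lambda>t. logit (PAV ls 1 1 t)
       - logit (real (count_list ls Th1) / real (length ls))) [0..<length ls]"

text \<open>Strict propriety condition (full support of rho on [0,1]), used for uniqueness.\<close>
definition full_support :: "real measure \<Rightarrow> bool" where
  "full_support rho \<longleftrightarrow> (\<forall>a b. 0 \<le> a \<longrightarrow> a < b \<longrightarrow> b \<le> 1 \<longrightarrow> emeasure rho {a<..<b} > 0)"

end

(*
  For a threshold x, the integrand of J at x only depends on which forecasts sigma(w_t + pi)
  lie at or below x.  For nondecreasing forecasts these form a prefix t < k, and the integrand
  is the cost of this cut: v1 / x for each theta_1 label before it plus v2 / (1 - x) for each
  theta_2 label after it.  Moving the cut across a segment changes this cost by a positive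
  multiple of the excess of the segment, its number of theta_1 labels minus e times its length,
  for a level e determined by x, pi and the class sizes.  The max-min formula for PAV says that
  the cut of the PAV values at level e has positive excess on every segment starting at it and
  nonpositive excess on every segment ending at it.  So the PAV solution minimizes the integrand
  at every threshold simultaneously, hence J for every rho and pi; and when rho charges every
  open interval, any other feasible solution pays strictly more on an interval of thresholds.
*)

theory Submission
  imports Defs
begin

lemma label_neq_iff [simp]: "l \<noteq> Th1 \<longleftrightarrow> l = Th2" "l \<noteq> Th2 \<longleftrightarrow> l = Th1"
  by (cases l; simp)+

lemma count_list_Th1_Th2: "count_list s Th1 + count_list s Th2 = length s"
  by (induction s) auto

section \<open>Segment excess and the max-min formula for PAV\<close>

definition label_gain :: "real \<Rightarrow> label \<Rightarrow> real" where
  "label_gain e l = (case l of Th1 \<Rightarrow> 1 - e | Th2 \<Rightarrow> - e)"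

definition excess :: "label list \<Rightarrow> real \<Rightarrow> nat \<Rightarrow> nat \<Rightarrow> real" where
  "excess ls e i j = (\<Sum>t\<in>{i..<j}. label_gain e (ls ! t))"

lemma excess_split: "i \<le> j \<Longrightarrow> j \<le> k \<Longrightarrow> excess ls e i k = excess ls e i j + excess ls e j k"
  unfolding excess_def by (simp add: sum.atLeastLessThan_concat)

lemma excess_segment:
  assumes "i \<le> j" "j \<le> length ls"
  defines "s \<equiv> take (j - i) (drop i ls)"
  shows "excess ls e i j = real (count_list s Th1) * (1 - e) - real (count_list s Th2) * e"
proof -
  have "s = map (nth ls) [i..<j]"
    unfolding s_def using assms by (intro nth_equalityI) auto
  then have "excess ls e i j = sum_list (map (label_gain e) s)"
    by (simp add: excess_def interv_sum_list_conv_sum_set_nat o_def)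
  also have "\<dots> = real (count_list s Th1) * (1 - e) - real (count_list s Th2) * e"
    by (induction s) (auto simp: label_gain_def algebra_simps split: label.split)
  finally show ?thesis .
qed

lemma seg_ratio_compare:
  assumes "i \<le> j" "j < length ls"
  shows "e < seg_ratio ls 1 1 i j \<longleftrightarrow> 0 < excess ls e i (Suc j)"
    and "seg_ratio ls 1 1 i j \<le> e \<longleftrightarrow> excess ls e i (Suc j) \<le> 0"
    and "seg_ratio ls 1 1 i j < e \<longleftrightarrow> excess ls e i (Suc j) < 0"
    and "0 \<le> seg_ratio ls 1 1 i j" "seg_ratio ls 1 1 i j \<le> 1"
proof -
  define s where "s = take (Suc j - i) (drop i ls)"
  define m where "m = real (count_list s Th1)"
  define n where "n = real (count_list s Th2)"
  have "m + n = real (length s)"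
    unfolding m_def n_def by (metis count_list_Th1_Th2 of_nat_add)
  then have pos: "0 < m + n" and nonneg: "0 \<le> m" "0 \<le> n"
    using assms by (auto simp: s_def m_def n_def)
  have r: "seg_ratio ls 1 1 i j = m / (m + n)"
    by (simp add: seg_ratio_def Let_def s_def m_def n_def)
  have d: "excess ls e i (Suc j) = m * (1 - e) - n * e"
    using excess_segment[of i "Suc j" ls e] assms by (simp add: m_def n_def s_def)
  show "e < seg_ratio ls 1 1 i j \<longleftrightarrow> 0 < excess ls e i (Suc j)"
    and "seg_ratio ls 1 1 i j \<le> e \<longleftrightarrow> excess ls e i (Suc j) \<le> 0"
    and "seg_ratio ls 1 1 i j < e \<longleftrightarrow> excess ls e i (Suc j) < 0"
    unfolding r d using pos by (simp_all add: field_simps)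
  show "0 \<le> seg_ratio ls 1 1 i j" "seg_ratio ls 1 1 i j \<le> 1"
    unfolding r using pos nonneg by simp_all
qed

lemma PAV_compare:
  assumes t: "t < length ls"
  shows "e < PAV ls 1 1 t \<longleftrightarrow> (\<exists>i\<le>t. \<forall>j. t \<le> j \<and> j < length ls \<longrightarrow> 0 < excess ls e i (Suc j))"
    and "PAV ls 1 1 t \<le> e \<longleftrightarrow> (\<forall>i\<le>t. \<exists>j. t \<le> j \<and> j < length ls \<and> excess ls e i (Suc j) \<le> 0)"
    and "PAV ls 1 1 t < e \<longleftrightarrow> (\<forall>i\<le>t. \<exists>j. t \<le> j \<and> j < length ls \<and> excess ls e i (Suc j) < 0)"
  using t unfolding PAV_def
  by (simp_all add: Max_gr_iff Min_gr_iff Max_le_iff Min_le_iff Max_less_iff Min_less_iff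
      seg_ratio_compare atLeastLessThan_empty_iff2 Bex_def) fastforce+

lemma PAV_bounds:
  assumes t: "t < length ls"
  shows "0 \<le> PAV ls 1 1 t" "PAV ls 1 1 t \<le> 1"
  using t unfolding PAV_def
  by (auto simp: Max_ge_iff Min_ge_iff Max_le_iff Min_le_iff seg_ratio_compare(4,5)
      intro!: bexI[of _ 0] bexI[of _ t])

lemma PAV_mono:
  assumes "s \<le> t" "t < length ls"
  shows "PAV ls 1 1 s \<le> PAV ls 1 1 t"
proof (rule ccontr)
  assume "\<not> ?thesis"
  then obtain i where "i \<le> s" "\<forall>j. s \<le> j \<and> j < length ls \<longrightarrow> 0 < excess ls (PAV ls 1 1 t) i (Suc j)"
    using PAV_compare(1)[of s ls "PAV ls 1 1 t"] assms by auto
  then show False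
    using PAV_compare(1)[of t ls "PAV ls 1 1 t"] assms by (meson order_trans less_irrefl)
qed

lemma PAV_pos:
  assumes t: "t < length ls" and "ls ! t = Th1"
  shows "0 < PAV ls 1 1 t"
proof -
  have "0 < excess ls 0 t (Suc j)" if "t \<le> j" for j
  proof -
    have "0 \<le> excess ls 0 (Suc t) (Suc j)"
      unfolding excess_def by (intro sum_nonneg) (simp add: label_gain_def split: label.split)
    with assms that show ?thesis
      using excess_split[of t "Suc t" "Suc j" ls 0] by (simp add: excess_def label_gain_def)
  qed
  with t show ?thesis
    using PAV_compare(1) by blast
qed

lemma PAV_less_one:
  assumes t: "t < length ls" and "ls ! t = Th2"
  shows "PAV ls 1 1 t < 1"
proof -
  have "excess ls 1 i (Suc t) < 0" if "i \<le> t" for i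
  proof -
    have "excess ls 1 i t \<le> 0"
      unfolding excess_def by (intro sum_nonpos) (simp add: label_gain_def split: label.split)
    with assms that show ?thesis
      using excess_split[of i t "Suc t" ls 1] by (simp add: excess_def label_gain_def)
  qed
  with t show ?thesis
    using PAV_compare(3) by blast
qed

definition cut_at :: "(nat \<Rightarrow> real) \<Rightarrow> nat \<Rightarrow> real \<Rightarrow> nat \<Rightarrow> bool" where
  "cut_at q T h k \<longleftrightarrow> k \<le> T \<and> (\<forall>t<T. q t \<le> h \<longleftrightarrow> t < k)"

lemma cut_at_exists:
  assumes mono: "\<And>s t. s \<le> t \<Longrightarrow> t < T \<Longrightarrow> q s \<le> q t"
  obtains k where "cut_at q T h k"
proof (cases "\<forall>t<T. q t \<le> h")
  case True
  then show ?thesis by (intro that[of T]) (auto simp: cut_at_def)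
next
  case False
  define k where "k = (LEAST t. t < T \<and> \<not> q t \<le> h)"
  have k: "k < T" "\<not> q k \<le> h"
    using LeastI_ex[of "\<lambda>t. t < T \<and> \<not> q t \<le> h"] False by (auto simp: k_def)
  have "q t \<le> h \<longleftrightarrow> t < k" if "t < T" for t
    using mono[of k t] not_less_Least[of t "\<lambda>t. t < T \<and> \<not> q t \<le> h"] k that
    by (fastforce simp: k_def)
  with k show ?thesis by (intro that[of k]) (auto simp: cut_at_def)
qed

text \<open>If the PAV values are \<open>\<le> e\<close> exactly before \<open>k\<close>, the max-min formula makes every
  segment starting at \<open>k\<close> have positive excess and every segment ending at \<open>k\<close> nonpositive excess:
  \<open>k\<close> is a boundary between pooled PAV blocks.\<close>

lemma excess_pos_after_PAV_cut:
  assumes cut: "cut_at (PAV ls 1 1) (length ls) e k" and j: "k < j" "j \<le> length ls"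
  shows "0 < excess ls e k j"
proof -
  have k: "k < length ls"
    using j by simp
  with cut have "\<not> PAV ls 1 1 k \<le> e"
    by (simp add: cut_at_def)
  with k obtain i where i: "i \<le> k"
    and pos: "\<forall>j'. k \<le> j' \<and> j' < length ls \<longrightarrow> 0 < excess ls e i (Suc j')"
    using PAV_compare(1) by (meson not_le)
  have pos_j: "0 < excess ls e i j"
    using pos[rule_format, of "j - 1"] j by (simp add: less_eq_Suc_le)
  show ?thesis
  proof (cases "i = k")
    case True
    with pos_j show ?thesis by simp
  next
    case False
    with i k have "i \<le> k - 1" "k - 1 < length ls" "PAV ls 1 1 (k - 1) \<le> e"
      using cut by (auto simp: cut_at_def)
    then obtain j0 where j0: "k - 1 \<le> j0" "j0 < length ls" "excess ls e i (Suc j0) \<le> 0"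
      using PAV_compare(2) by blast
    have "\<not> k \<le> j0"
      using j0 pos by force
    with j0 have "j0 = k - 1" by simp
    with j0 False i have "excess ls e i k \<le> 0" by simp
    with pos_j show ?thesis
      using excess_split[of i k j ls e] i j by simp
  qed
qed

lemma excess_before_PAV_cut_le:
  assumes cut: "cut_at (PAV ls 1 1) (length ls) e k" and i: "i < k"
    and j: "k - 1 \<le> j" "j < length ls"
  shows "excess ls e i k \<le> excess ls e i (Suc j)"
proof (cases "j = k - 1")
  case False
  then have "0 < excess ls e k (Suc j)"
    using excess_pos_after_PAV_cut[OF cut] j by simp
  then show ?thesis
    using excess_split[of i k "Suc j" ls e] i j False by simp
qed (use i in simp)

lemma excess_nonpos_before_PAV_cut:
  assumes cut: "cut_at (PAV ls 1 1) (length ls) e k" and i: "i < k"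
  shows "excess ls e i k \<le> 0"
proof -
  have "PAV ls 1 1 (k - 1) \<le> e" "i \<le> k - 1" "k - 1 < length ls"
    using cut i by (auto simp: cut_at_def)
  then obtain j where "k - 1 \<le> j" "j < length ls" "excess ls e i (Suc j) \<le> 0"
    using PAV_compare(2) by blast
  with excess_before_PAV_cut_le[OF cut i] show ?thesis by fastforce
qed

lemma excess_neg_before_PAV_cut:
  assumes cut: "cut_at (PAV ls 1 1) (length ls) e k" and i: "i < k"
    and less: "PAV ls 1 1 (k - 1) < e"
  shows "excess ls e i k < 0"
proof -
  have "i \<le> k - 1" "k - 1 < length ls"
    using cut i by (auto simp: cut_at_def)
  then obtain j where "k - 1 \<le> j" "j < length ls" "excess ls e i (Suc j) < 0"
    using PAV_compare(3) less by blast
  with excess_before_PAV_cut_le[OF cut i] show ?thesis by fastforce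
qed

section \<open>Reweighted forecasts\<close>

text \<open>\<open>reweight v1 v2\<close> multiplies the odds of \<open>p\<close> by \<open>v1 / v2\<close>; \<open>reweight v2 v1\<close> is its inverse.\<close>

definition reweight :: "real \<Rightarrow> real \<Rightarrow> real \<Rightarrow> real" where
  "reweight v1 v2 p = p * v1 / (p * v1 + (1 - p) * v2)"

lemma reweight_denominator_pos:
  fixes v1 v2 p :: real
  assumes "0 < v1" "0 < v2" "0 \<le> p" "p \<le> 1"
  shows "0 < p * v1 + (1 - p) * v2"
proof (cases "p = 0")
  case False
  with assms have "0 < p * v1"
    by (auto intro: mult_pos_pos)
  moreover have "0 \<le> (1 - p) * v2"
    using assms by simp
  ultimately show ?thesis by linarith
qed (use assms in simp)

lemma reweight_compare:
  assumes v: "0 < v1" "0 < v2" and p: "0 \<le> p" "p \<le> 1" and x: "0 \<le> x" "x \<le> 1"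
  shows "reweight v1 v2 p \<le> x \<longleftrightarrow> p \<le> reweight v2 v1 x"
    and "reweight v1 v2 p < x \<longleftrightarrow> p < reweight v2 v1 x"
proof -
  have dp: "0 < p * v1 + (1 - p) * v2" and dx: "0 < x * v2 + (1 - x) * v1"
    using reweight_denominator_pos v p x by auto
  have "reweight v1 v2 p \<le> x \<longleftrightarrow> p * (x * v2 + (1 - x) * v1) \<le> x * v2"
    unfolding reweight_def using dp by (simp add: divide_le_eq algebra_simps)
  also have "\<dots> \<longleftrightarrow> p \<le> reweight v2 v1 x"
    unfolding reweight_def using dx by (simp add: le_divide_eq)
  finally show "reweight v1 v2 p \<le> x \<longleftrightarrow> p \<le> reweight v2 v1 x" .
  have "reweight v1 v2 p < x \<longleftrightarrow> p * (x * v2 + (1 - x) * v1) < x * v2"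
    unfolding reweight_def using dp by (simp add: divide_less_eq algebra_simps)
  also have "\<dots> \<longleftrightarrow> p < reweight v2 v1 x"
    unfolding reweight_def using dx by (simp add: less_divide_eq)
  finally show "reweight v1 v2 p < x \<longleftrightarrow> p < reweight v2 v1 x" .
qed

lemma reweight_bounds:
  assumes "0 < v1" "0 < v2" "0 \<le> p" "p \<le> 1"
  shows "0 \<le> reweight v1 v2 p" "reweight v1 v2 p \<le> 1"
  using reweight_denominator_pos[OF assms] assms by (simp_all add: reweight_def)

lemma reweight_pos: "0 < v1 \<Longrightarrow> 0 < v2 \<Longrightarrow> 0 < p \<Longrightarrow> p \<le> 1 \<Longrightarrow> 0 < reweight v1 v2 p"
  using reweight_compare(1)[of v1 v2 p 0] by (simp add: reweight_def)

lemma reweight_less_one: "0 < v1 \<Longrightarrow> 0 < v2 \<Longrightarrow> 0 \<le> p \<Longrightarrow> p < 1 \<Longrightarrow> reweight v1 v2 p < 1"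
  using reweight_compare(2)[of v1 v2 p 1] by (simp add: reweight_def)

lemma reweight_scale:
  assumes "c \<noteq> 0"
  shows "reweight (c * v1) (c * v2) p = reweight v1 v2 p"
proof -
  have "p * (c * v1) + (1 - p) * (c * v2) = c * (p * v1 + (1 - p) * v2)"
    by (simp add: algebra_simps)
  with assms show ?thesis
    by (simp add: reweight_def mult.left_commute[of p c])
qed

lemma lweight_pos:
  assumes "count_list ls Th1 \<ge> 1" "count_list ls Th2 \<ge> 1"
  shows "0 < lweight ls pr Th1" "0 < lweight ls pr Th2"
  using assms by (simp_all add: lweight_def sigm_def add_pos_pos)

definition pav_forecast :: "label list \<Rightarrow> real \<Rightarrow> nat \<Rightarrow> real" where
  "pav_forecast ls pr t = reweight (lweight ls pr Th1) (lweight ls pr Th2) (PAV ls 1 1 t)"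

lemma pav_forecast_bounds:
  assumes "count_list ls Th1 \<ge> 1" "count_list ls Th2 \<ge> 1" "t < length ls"
  shows "0 \<le> pav_forecast ls pr t" "pav_forecast ls pr t \<le> 1"
  using reweight_bounds[OF lweight_pos[OF assms(1,2)] PAV_bounds[OF assms(3)]]
  by (simp_all add: pav_forecast_def)

lemma cut_at_pav_forecast:
  assumes "count_list ls Th1 \<ge> 1" "count_list ls Th2 \<ge> 1" and x: "0 \<le> x" "x \<le> 1"
  shows "cut_at (pav_forecast ls pr) (length ls) x k
    \<longleftrightarrow> cut_at (PAV ls 1 1) (length ls) (reweight (lweight ls pr Th2) (lweight ls pr Th1) x) k"
  using reweight_compare(1)[OF lweight_pos[OF assms(1,2)] _ _ x] PAV_bounds
  by (simp add: cut_at_def pav_forecast_def)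

lemma sigm_strict_mono: "a < b \<Longrightarrow> sigm a < sigm b"
proof (cases a; cases b)
  fix r s
  assume "a < b" "a = ereal r" "b = ereal s"
  then show ?thesis
    by (simp add: sigm_def frac_less2 add_pos_pos)
qed (auto simp: sigm_def add_pos_nonneg)

lemma sigm_mono: "a \<le> b \<Longrightarrow> sigm a \<le> sigm b"
  using sigm_strict_mono by (cases "a = b") (auto simp: less_le)

lemma sigm_bounds: "0 \<le> sigm w" "sigm w \<le> 1"
  by (cases w; simp add: sigm_def add_pos_nonneg)+

lemma sigm_plus_ereal_inj:
  assumes "sigm (a + ereal r) = sigm (b + ereal r)"
  shows "a = b"
proof (rule ccontr)
  have shift: "x < y \<Longrightarrow> x + ereal r < y + ereal r" for x y
    by (cases x; cases y) simp_all
  assume "a \<noteq> b"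
  then have "a < b \<or> b < a"
    by auto
  with assms show False
    using sigm_strict_mono[OF shift] by (metis less_irrefl)
qed

lemma logit_mono: "0 \<le> x \<Longrightarrow> x \<le> y \<Longrightarrow> y \<le> 1 \<Longrightarrow> logit x \<le> logit y"
  by (auto simp: logit_def divide_pos_pos intro!: frac_le)

lemma sigm_logit_plus:
  assumes "0 \<le> p" "p \<le> 1"
  shows "sigm (logit p + ereal a) = reweight 1 (exp (- a)) p"
proof -
  consider "p = 0" | "p = 1" | "0 < p" "p < 1"
    using assms by linarith
  then show ?thesis
  proof cases
    case 3
    define E where "E = exp (- a)"
    have "exp (- (ln (p / (1 - p)) + a)) = E * inverse (exp (ln (p / (1 - p))))"
      by (simp add: E_def exp_add[symmetric] exp_minus[symmetric])
    with 3 have "exp (- (ln (p / (1 - p)) + a)) = (1 - p) / p * E"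
      by simp
    moreover have "logit p + ereal a = ereal (ln (p / (1 - p)) + a)"
      using 3 by (simp add: logit_def)
    ultimately have "sigm (logit p + ereal a) = 1 / (1 + (1 - p) / p * E)"
      by (simp add: sigm_def)
    also have "\<dots> = p * 1 / (p * 1 + (1 - p) * E)"
      using 3 by (simp add: field_simps)
    finally show ?thesis
      by (simp add: reweight_def E_def)
  qed (simp_all add: logit_def sigm_def reweight_def)
qed

lemma logit_ratio:
  assumes "0 < a" "0 < b"
  shows "logit (a / (a + b)) = ereal (ln (a / b))"
proof -
  have "1 - a / (a + b) = b / (a + b)"
    using assms by (simp add: field_simps)
  then have "a / (a + b) / (1 - a / (a + b)) = a / b"
    using assms by simp
  moreover have "a / (a + b) \<noteq> 0" "a / (a + b) \<noteq> 1"
    using assms by auto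
  ultimately show ?thesis
    by (simp add: logit_def)
qed

lemma sigm_pav_solution:
  assumes "count_list ls Th1 \<ge> 1" "count_list ls Th2 \<ge> 1" and t: "t < length ls"
  shows "sigm (pav_solution ls ! t + ereal pr) = pav_forecast ls pr t"
proof -
  define T1 where "T1 = real (count_list ls Th1)"
  define T2 where "T2 = real (count_list ls Th2)"
  define p where "p = PAV ls 1 1 t"
  define E where "E = exp (- pr)"
  have T: "0 < T1" "0 < T2" and len: "real (length ls) = T1 + T2"
    using assms count_list_Th1_Th2[of ls] by (auto simp: T1_def T2_def simp flip: of_nat_add)
  have p: "0 \<le> p" "p \<le> 1"
    using PAV_bounds[OF t] by (simp_all add: p_def)
  have sig: "sigm (ereal pr) = 1 / (1 + E)" and E: "0 < 1 + E"
    by (simp_all add: sigm_def E_def add_pos_pos)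
  have "pav_solution ls ! t + ereal pr = logit p + ereal (pr - ln (T1 / T2))"
    using t logit_ratio[OF T] by (cases "logit p") (simp_all add: pav_solution_def p_def T1_def len)
  then have "sigm (pav_solution ls ! t + ereal pr) = reweight 1 (T1 / T2 * E) p"
    using sigm_logit_plus[OF p] T by (simp add: E_def exp_diff exp_minus divide_inverse ac_simps)
  also have "\<dots> = reweight (sigm (ereal pr) / T1 * 1) (sigm (ereal pr) / T1 * (T1 / T2 * E)) p"
    using T E by (intro reweight_scale[symmetric]) (simp add: sig)
  also have "sigm (ereal pr) / T1 * 1 = lweight ls pr Th1"
    by (simp add: lweight_def T1_def)
  also have "sigm (ereal pr) / T1 * (T1 / T2 * E) = lweight ls pr Th2"
  proof -
    have "1 - 1 / (1 + E) = E / (1 + E)"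
      using E by (simp add: field_simps)
    with T show ?thesis
      by (simp add: lweight_def T2_def[symmetric] sig)
  qed
  finally show ?thesis
    by (simp add: pav_forecast_def p_def)
qed

section \<open>Threshold costs\<close>

text \<open>At a threshold \<open>x \<in> [0, 1)\<close>, the integrand of \<open>v\<^sub>l C\<^sub>\<rho>(l, q)\<close> is \<open>cost_below\<close> if
  \<open>q \<le> x\<close> and \<open>cost_above\<close> otherwise (see \<open>Jobj_density_cut\<close>).\<close>

definition cost_below :: "real \<Rightarrow> real \<Rightarrow> label \<Rightarrow> ennreal" where
  "cost_below v1 x l = (if l = Th1 then ennreal v1 * inverse (ennreal x) else 0)"

definition cost_above :: "real \<Rightarrow> real \<Rightarrow> label \<Rightarrow> ennreal" where
  "cost_above v2 x l = (if l = Th2 then ennreal v2 * inverse (ennreal (1 - x)) else 0)"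

lemma cost_below_real:
  "0 < x \<Longrightarrow> 0 \<le> v1 \<Longrightarrow> cost_below v1 x l = ennreal (if l = Th1 then v1 / x else 0)"
  by (simp add: cost_below_def inverse_ennreal divide_inverse ennreal_mult)

lemma cost_above_real:
  "x < 1 \<Longrightarrow> 0 \<le> v2 \<Longrightarrow> cost_above v2 x l = ennreal (if l = Th2 then v2 / (1 - x) else 0)"
  by (simp add: cost_above_def inverse_ennreal divide_inverse ennreal_mult)

lemma cost_difference:
  assumes v: "0 < v1" "0 < v2" and x: "0 < x" "x < 1"
  shows "(if l = Th1 then v1 / x else 0) - (if l = Th2 then v2 / (1 - x) else 0)
    = (x * v2 + (1 - x) * v1) / (x * (1 - x)) * label_gain (reweight v2 v1 x) l"
proof -
  define D where "D = x * v2 + (1 - x) * v1"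
  have D: "0 < D"
    using reweight_denominator_pos[of v2 v1 x] v x by (simp add: D_def)
  then have "reweight v2 v1 x = x * v2 / D" "1 - reweight v2 v1 x = (1 - x) * v1 / D"
    by (simp_all add: reweight_def D_def field_simps)
  with x D show ?thesis
    unfolding D_def[symmetric] by (cases l) (simp_all add: label_gain_def field_simps D_def)
qed

lemma sum_costs_compare_interior:
  fixes lab :: "'a \<Rightarrow> label"
  assumes "finite A" and v: "0 < v1" "0 < v2" and x: "0 < x" "x < 1"
  defines "g \<equiv> (\<Sum>t\<in>A. label_gain (reweight v2 v1 x) (lab t))"
    and "Sb \<equiv> (\<Sum>t\<in>A. cost_below v1 x (lab t))"
    and "Sa \<equiv> (\<Sum>t\<in>A. cost_above v2 x (lab t))"
  shows "0 < g \<Longrightarrow> Sa < Sb" and "g < 0 \<Longrightarrow> Sb < Sa" and "g \<le> 0 \<Longrightarrow> Sb \<le> Sa"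
    and "Sb \<noteq> \<top>" "Sa \<noteq> \<top>"
proof -
  define b where "b = (\<Sum>t\<in>A. if lab t = Th1 then v1 / x else 0)"
  define a where "a = (\<Sum>t\<in>A. if lab t = Th2 then v2 / (1 - x) else 0)"
  have Sb: "Sb = ennreal b"
    using v x by (simp add: Sb_def b_def cost_below_real)
  have Sa: "Sa = ennreal a"
    using v x by (simp add: Sa_def a_def cost_above_real)
  have nonneg: "0 \<le> a" "0 \<le> b"
    using v x unfolding a_def b_def by (auto intro!: sum_nonneg)
  define K where "K = (x * v2 + (1 - x) * v1) / (x * (1 - x))"
  have K: "0 < K"
    using reweight_denominator_pos[of v2 v1 x] v x by (simp add: K_def)
  have "b - a = K * g"
    unfolding a_def b_def g_def K_def
    by (simp add: sum_subtractf[symmetric] sum_distrib_left cost_difference[OF v x])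
  moreover have "0 < g \<longleftrightarrow> 0 < K * g" "g < 0 \<longleftrightarrow> K * g < 0"
    using K by (simp_all add: zero_less_mult_iff mult_less_0_iff)
  ultimately have sign: "0 < g \<longleftrightarrow> a < b" "g < 0 \<longleftrightarrow> b < a" "g \<le> 0 \<longleftrightarrow> b \<le> a"
    by linarith+
  show "0 < g \<Longrightarrow> Sa < Sb" "g < 0 \<Longrightarrow> Sb < Sa"
    using sign(1,2) nonneg by (simp_all add: Sa Sb ennreal_less_iff)
  show "g \<le> 0 \<Longrightarrow> Sb \<le> Sa"
    unfolding Sa Sb using sign(3) by (intro ennreal_leI) simp
  show "Sb \<noteq> \<top>" "Sa \<noteq> \<top>"
    by (simp_all add: Sa Sb)
qed

lemma sum_cost_below_at_zero:
  fixes lab :: "'a \<Rightarrow> label" and v2 :: real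
  assumes A: "finite A" and v1: "0 < v1"
  defines "g \<equiv> (\<Sum>t\<in>A. label_gain (reweight v2 v1 0) (lab t))"
    and "Sb \<equiv> (\<Sum>t\<in>A. cost_below v1 0 (lab t))"
  shows "0 < g \<Longrightarrow> Sb = \<top>" and "g \<le> 0 \<Longrightarrow> Sb = 0"
proof -
  have gain: "label_gain (reweight v2 v1 0) l = (if l = Th1 then 1 else 0)" for l
    using v1 by (cases l) (simp_all add: label_gain_def reweight_def)
  \<comment> \<open>\<open>inverse (ennreal 0) = \<infinity>\<close>\<close>
  have cost: "cost_below v1 0 l = (if l = Th1 then \<top> else 0)" for l
    using v1 by (simp add: cost_below_def ennreal_mult_top)
  show "Sb = \<top>" if "0 < g"
  proof -
    have "\<exists>t\<in>A. lab t = Th1"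
    proof (rule ccontr)
      assume "\<not> ?thesis"
      then have "g = 0"
        unfolding g_def gain by (intro sum.neutral) simp
      with that show False by simp
    qed
    with A show ?thesis
      by (simp add: Sb_def cost ennreal_sum_eq_top)
  qed
  show "Sb = 0" if "g \<le> 0"
  proof -
    have "g = 0"
      using that unfolding g_def gain by (intro antisym sum_nonneg) auto
    with A have "\<forall>t\<in>A. lab t \<noteq> Th1"
      unfolding g_def gain by (subst (asm) sum_nonneg_eq_0_iff) (auto split: if_splits)
    then show ?thesis
      by (simp add: Sb_def cost)
  qed
qed

lemma sum_costs_compare:
  fixes lab :: "'a \<Rightarrow> label"
  assumes A: "finite A" and v: "0 < v1" "0 < v2" and x: "0 \<le> x" "x < 1"
  defines "g \<equiv> (\<Sum>t\<in>A. label_gain (reweight v2 v1 x) (lab t))"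
    and "Sb \<equiv> (\<Sum>t\<in>A. cost_below v1 x (lab t))"
    and "Sa \<equiv> (\<Sum>t\<in>A. cost_above v2 x (lab t))"
  shows "0 < g \<Longrightarrow> Sa \<le> Sb" and "g \<le> 0 \<Longrightarrow> Sb \<le> Sa"
proof -
  show "Sa \<le> Sb" if "0 < g"
  proof (cases "x = 0")
    case True
    with that show ?thesis
      using sum_cost_below_at_zero(1)[OF A v(1), of v2 lab] by (simp add: g_def Sb_def)
  next
    case False
    with x that show ?thesis
      using sum_costs_compare_interior(1)[OF A v _ x(2), of lab] by (simp add: g_def Sb_def Sa_def)
  qed
  show "Sb \<le> Sa" if "g \<le> 0"
  proof (cases "x = 0")
    case True
    with that show ?thesis
      using sum_cost_below_at_zero(2)[OF A v(1), of v2 lab] by (simp add: g_def Sb_def)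
  next
    case False
    with x that show ?thesis
      using sum_costs_compare_interior(3)[OF A v _ x(2), of lab] by (simp add: g_def Sb_def Sa_def)
  qed
qed

lemma ennreal_add_strict_mono_middle:
  fixes a b m m' :: ennreal
  assumes "a \<noteq> \<top>" "b \<noteq> \<top>" "m < m'"
  shows "a + m + b < a + m' + b"
proof -
  have "b + (a + m) < b + (a + m')"
    using assms by (simp add: ennreal_add_left_cancel_less)
  then show ?thesis
    by (simp add: ac_simps)
qed

definition cut_cost :: "label list \<Rightarrow> real \<Rightarrow> real \<Rightarrow> real \<Rightarrow> nat \<Rightarrow> ennreal" where
  "cut_cost ls v1 v2 x k =
    (\<Sum>t<k. cost_below v1 x (ls ! t)) + (\<Sum>t\<in>{k..<length ls}. cost_above v2 x (ls ! t))"

lemma cut_cost_split: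
  fixes v1 v2 x :: real
  assumes "k \<le> k'" "k' \<le> length ls"
  defines "P \<equiv> (\<Sum>t<k. cost_below v1 x (ls ! t))"
    and "R \<equiv> (\<Sum>t\<in>{k'..<length ls}. cost_above v2 x (ls ! t))"
  shows "cut_cost ls v1 v2 x k = P + (\<Sum>t\<in>{k..<k'}. cost_above v2 x (ls ! t)) + R"
    and "cut_cost ls v1 v2 x k' = P + (\<Sum>t\<in>{k..<k'}. cost_below v1 x (ls ! t)) + R"
  using assms(1,2)
  by (simp_all add: cut_cost_def P_def R_def lessThan_atLeast0 sum.atLeastLessThan_concat add.assoc)

lemma PAV_cut_cost_le:
  assumes v: "0 < v1" "0 < v2" and x: "0 \<le> x" "x < 1"
    and cut: "cut_at (PAV ls 1 1) (length ls) (reweight v2 v1 x) ks" and k: "k \<le> length ls"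
  shows "cut_cost ls v1 v2 x ks \<le> cut_cost ls v1 v2 x k"
proof (cases ks k rule: linorder_cases)
  case less
  then have "0 < excess ls (reweight v2 v1 x) ks k"
    using excess_pos_after_PAV_cut[OF cut] k by simp
  then have "(\<Sum>t\<in>{ks..<k}. cost_above v2 x (ls ! t)) \<le> (\<Sum>t\<in>{ks..<k}. cost_below v1 x (ls ! t))"
    using sum_costs_compare(1)[OF _ v x, where lab = "nth ls"] by (simp add: excess_def)
  then show ?thesis
    using cut_cost_split[OF less_imp_le[OF less] k] by (simp add: add_mono)
next
  case greater
  then have "excess ls (reweight v2 v1 x) k ks \<le> 0"
    using excess_nonpos_before_PAV_cut[OF cut] by simp
  then have "(\<Sum>t\<in>{k..<ks}. cost_below v1 x (ls ! t)) \<le> (\<Sum>t\<in>{k..<ks}. cost_above v2 x (ls ! t))"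
    using sum_costs_compare(2)[OF _ v x, where lab = "nth ls"] by (simp add: excess_def)
  moreover have "ks \<le> length ls"
    using cut by (simp add: cut_at_def)
  ultimately show ?thesis
    using cut_cost_split[OF less_imp_le[OF greater]] by (simp add: add_mono)
qed simp

lemma PAV_cut_cost_less:
  assumes v: "0 < v1" "0 < v2" and x: "0 < x" "x < 1"
    and cut: "cut_at (PAV ls 1 1) (length ls) (reweight v2 v1 x) ks" and k: "k \<le> length ls"
    and ne: "k \<noteq> ks" and below: "0 < ks \<Longrightarrow> PAV ls 1 1 (ks - 1) < reweight v2 v1 x"
  shows "cut_cost ls v1 v2 x ks < cut_cost ls v1 v2 x k"
proof -
  have finite: "(\<Sum>t\<in>A. cost_below v1 x (ls ! t)) \<noteq> \<top>" "(\<Sum>t\<in>A. cost_above v2 x (ls ! t)) \<noteq> \<top>"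
    if "finite A" for A
    using sum_costs_compare_interior(4,5)[OF that v x] by auto
  have ks: "ks \<le> length ls"
    using cut by (simp add: cut_at_def)
  consider "ks < k" | "k < ks"
    using ne by linarith
  then show ?thesis
  proof cases
    case 1
    then have "0 < excess ls (reweight v2 v1 x) ks k"
      using excess_pos_after_PAV_cut[OF cut] k by simp
    then have "(\<Sum>t\<in>{ks..<k}. cost_above v2 x (ls ! t)) < (\<Sum>t\<in>{ks..<k}. cost_below v1 x (ls ! t))"
      using sum_costs_compare_interior(1)[OF _ v x, where lab = "nth ls"] by (simp add: excess_def)
    then show ?thesis
      unfolding cut_cost_split[OF less_imp_le[OF 1] k, of v1 v2 x] by (intro ennreal_add_strict_mono_middle finite) auto
  next
    case 2
    then have "excess ls (reweight v2 v1 x) k ks < 0"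
      using excess_neg_before_PAV_cut[OF cut] below by simp
    then have "(\<Sum>t\<in>{k..<ks}. cost_below v1 x (ls ! t)) < (\<Sum>t\<in>{k..<ks}. cost_above v2 x (ls ! t))"
      using sum_costs_compare_interior(2)[OF _ v x, where lab = "nth ls"] by (simp add: excess_def)
    then show ?thesis
      unfolding cut_cost_split[OF less_imp_le[OF 2] ks, of v1 v2 x] by (intro ennreal_add_strict_mono_middle finite) auto
  qed
qed

section \<open>The objective as an integral over thresholds\<close>

definition score_density :: "label \<Rightarrow> real \<Rightarrow> real \<Rightarrow> ennreal" where
  "score_density l q x = (case l of
      Th1 \<Rightarrow> indicator {q..1} x * inverse (ennreal x)
    | Th2 \<Rightarrow> indicator {0..<q} x * inverse (ennreal (1 - x)))"

lemma Crho_eq_nn_integral: "Crho rho l q = (\<integral>\<^sup>+x. score_density l q x \<partial>rho)"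
  by (cases l) (simp_all add: Crho_def score_density_def)

lemma borel_measurable_score_density [measurable]: "score_density l q \<in> borel_measurable borel"
  unfolding score_density_def by (cases l) simp_all

definition Jobj_density :: "label list \<Rightarrow> real \<Rightarrow> (nat \<Rightarrow> real) \<Rightarrow> real \<Rightarrow> ennreal" where
  "Jobj_density ls pr q x =
    (\<Sum>t<length ls. ennreal (lweight ls pr (ls ! t)) * score_density (ls ! t) (q t) x)"

lemma borel_measurable_Jobj_density [measurable]: "Jobj_density ls pr q \<in> borel_measurable borel"
  unfolding Jobj_density_def by measurable

lemma Jobj_eq_nn_integral:
  assumes "sets rho = sets borel"
  shows "Jobj rho pr ls ws = (\<integral>\<^sup>+x. Jobj_density ls pr (\<lambda>t. sigm (ws ! t + ereal pr)) x \<partial>rho)"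
proof -
  have [measurable]: "score_density l q \<in> borel_measurable rho" for l q
    by (subst measurable_cong_sets[OF assms refl]) simp
  show ?thesis
    unfolding Jobj_def Jobj_density_def Crho_eq_nn_integral
    by (subst nn_integral_sum) (simp_all add: nn_integral_cmult)
qed

lemma Jobj_density_cut:
  assumes q: "\<forall>t<length ls. 0 \<le> q t \<and> q t \<le> 1" and x: "0 \<le> x" "x < 1"
    and cut: "cut_at q (length ls) x k"
  shows "Jobj_density ls pr q x = cut_cost ls (lweight ls pr Th1) (lweight ls pr Th2) x k"
proof -
  let ?below = "\<lambda>t. cost_below (lweight ls pr Th1) x (ls ! t)"
  let ?above = "\<lambda>t. cost_above (lweight ls pr Th2) x (ls ! t)"
  have k: "k \<le> length ls" and side: "\<forall>t<length ls. q t \<le> x \<longleftrightarrow> t < k"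
    using cut by (simp_all add: cut_at_def)
  have "Jobj_density ls pr q x = (\<Sum>t<length ls. if t < k then ?below t else ?above t)"
    unfolding Jobj_density_def using q x side
    by (intro sum.cong refl, case_tac "ls ! t")
      (auto simp: score_density_def cost_below_def cost_above_def indicator_def)
  also have "\<dots> = (\<Sum>t<k. ?below t) + (\<Sum>t\<in>{k..<length ls}. ?above t)"
  proof -
    have "{..<length ls} \<inter> {t. t < k} = {..<k}" "{..<length ls} \<inter> - {t. t < k} = {k..<length ls}"
      using k by auto
    then show ?thesis
      unfolding sum.If_cases[OF finite_lessThan] by simp
  qed
  finally show ?thesis
    by (simp add: cut_cost_def)
qed

lemma score_density_outside:
  assumes "x < 0 \<or> 1 \<le> x" "0 \<le> q" "q \<le> 1" "0 \<le> q'" "q' \<le> 1"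
  shows "score_density l q x = score_density l q' x"
  using assms by (cases l) (auto simp: score_density_def indicator_def)

lemma Jobj_density_outside:
  assumes "x < 0 \<or> 1 \<le> x"
    and "\<forall>t<length ls. 0 \<le> q t \<and> q t \<le> 1" "\<forall>t<length ls. 0 \<le> q' t \<and> q' t \<le> 1"
  shows "Jobj_density ls pr q x = Jobj_density ls pr q' x"
  unfolding Jobj_density_def using assms
  by (intro sum.cong refl arg_cong2[where f = "(*)"] score_density_outside) auto

lemma Jobj_density_pav_forecast_cut:
  assumes c: "count_list ls Th1 \<ge> 1" "count_list ls Th2 \<ge> 1" and x: "0 \<le> x" "x < 1"
    and ks: "cut_at (PAV ls 1 1) (length ls) (reweight (lweight ls pr Th2) (lweight ls pr Th1) x) ks"
  shows "Jobj_density ls pr (pav_forecast ls pr) x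
    = cut_cost ls (lweight ls pr Th1) (lweight ls pr Th2) x ks"
  using Jobj_density_cut pav_forecast_bounds[OF c] cut_at_pav_forecast[OF c] ks x by simp

lemma Jobj_density_pav_forecast_le:
  assumes c: "count_list ls Th1 \<ge> 1" "count_list ls Th2 \<ge> 1"
    and mono: "\<And>s t. s \<le> t \<Longrightarrow> t < length ls \<Longrightarrow> q s \<le> q t"
    and q: "\<forall>t<length ls. 0 \<le> q t \<and> q t \<le> 1"
  shows "Jobj_density ls pr (pav_forecast ls pr) x \<le> Jobj_density ls pr q x"
proof (cases "0 \<le> x \<and> x < 1")
  case True
  define v1 v2 where "v1 = lweight ls pr Th1" and "v2 = lweight ls pr Th2"
  obtain ks where ks: "cut_at (PAV ls 1 1) (length ls) (reweight v2 v1 x) ks"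
    using cut_at_exists PAV_mono by blast
  obtain k where k: "cut_at q (length ls) x k"
    using cut_at_exists mono by blast
  have "Jobj_density ls pr (pav_forecast ls pr) x = cut_cost ls v1 v2 x ks"
    using Jobj_density_pav_forecast_cut[OF c] ks True by (simp add: v1_def v2_def)
  also have "\<dots> \<le> cut_cost ls v1 v2 x k"
    using PAV_cut_cost_le lweight_pos[OF c] True ks k by (simp add: v1_def v2_def cut_at_def)
  also have "\<dots> = Jobj_density ls pr q x"
    using Jobj_density_cut[OF q _ _ k] True by (simp add: v1_def v2_def)
  finally show ?thesis .
next
  case False
  then have "x < 0 \<or> 1 \<le> x"
    by linarith
  then show ?thesis
    using Jobj_density_outside[of x ls "pav_forecast ls pr" q] pav_forecast_bounds[OF c] q by simp
qed

lemma Jobj_density_pav_forecast_less: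
  assumes c: "count_list ls Th1 \<ge> 1" "count_list ls Th2 \<ge> 1"
    and mono: "\<And>s t. s \<le> t \<Longrightarrow> t < length ls \<Longrightarrow> q s \<le> q t"
    and q: "\<forall>t<length ls. 0 \<le> q t \<and> q t \<le> 1"
    and x: "0 < x" "x < 1" and avoid: "\<forall>t<length ls. pav_forecast ls pr t \<noteq> x"
    and t0: "t0 < length ls" "(q t0 \<le> x) \<noteq> (pav_forecast ls pr t0 \<le> x)"
  shows "Jobj_density ls pr (pav_forecast ls pr) x < Jobj_density ls pr q x"
proof -
  define v1 v2 where "v1 = lweight ls pr Th1" and "v2 = lweight ls pr Th2"
  have v: "0 < v1" "0 < v2"
    using lweight_pos[OF c] by (simp_all add: v1_def v2_def)
  obtain ks where ks: "cut_at (PAV ls 1 1) (length ls) (reweight v2 v1 x) ks"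
    using cut_at_exists PAV_mono by blast
  then have ks': "cut_at (pav_forecast ls pr) (length ls) x ks"
    using cut_at_pav_forecast[OF c] x by (simp add: v1_def v2_def)
  obtain k where k: "cut_at q (length ls) x k"
    using cut_at_exists mono by blast
  have "k \<noteq> ks"
    using k ks' t0 by (auto simp: cut_at_def)
  moreover have "PAV ls 1 1 (ks - 1) < reweight v2 v1 x" if "0 < ks"
  proof -
    have "ks - 1 < length ls" "pav_forecast ls pr (ks - 1) \<le> x"
      using ks' that by (auto simp: cut_at_def)
    with avoid have "pav_forecast ls pr (ks - 1) < x"
      by force
    with \<open>ks - 1 < length ls\<close> show ?thesis
      using reweight_compare(2)[OF v PAV_bounds[of "ks - 1" ls]] x
      by (simp add: pav_forecast_def v1_def v2_def)
  qed
  ultimately have "cut_cost ls v1 v2 x ks < cut_cost ls v1 v2 x k"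
    using PAV_cut_cost_less[OF v x ks] k by (simp add: cut_at_def)
  moreover have "Jobj_density ls pr (pav_forecast ls pr) x = cut_cost ls v1 v2 x ks"
    using Jobj_density_pav_forecast_cut[OF c] ks x by (simp add: v1_def v2_def)
  moreover have "Jobj_density ls pr q x = cut_cost ls v1 v2 x k"
    using Jobj_density_cut[OF q _ _ k] x by (simp add: v1_def v2_def)
  ultimately show ?thesis
    by simp
qed

section \<open>Existence and uniqueness of the minimizer\<close>

lemma pav_solution_feasible: "feasible (length ls) (pav_solution ls)"
  unfolding feasible_def sorted_iff_nth_mono
proof (intro conjI allI impI)
  fix i j
  assume "i \<le> j" "j < length (pav_solution ls)"
  then have "logit (PAV ls 1 1 i) \<le> logit (PAV ls 1 1 j)"
    using logit_mono PAV_bounds PAV_mono by (simp add: pav_solution_def)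
  with \<open>i \<le> j\<close> \<open>j < length (pav_solution ls)\<close> show "pav_solution ls ! i \<le> pav_solution ls ! j"
    by (simp add: pav_solution_def ereal_minus_mono)
qed (simp add: pav_solution_def)

lemma feasible_forecast_mono:
  assumes "feasible (length ls) ws" "s \<le> t" "t < length ls"
  shows "sigm (ws ! s + ereal pr) \<le> sigm (ws ! t + ereal pr)"
  using assms unfolding feasible_def sorted_iff_nth_mono by (auto intro!: sigm_mono add_right_mono)

lemma feasible_forecast_ne_pav_forecast:
  assumes c: "count_list ls Th1 \<ge> 1" "count_list ls Th2 \<ge> 1"
    and ws: "feasible (length ls) ws" "ws \<noteq> pav_solution ls"
  obtains t0 where "t0 < length ls" "sigm (ws ! t0 + ereal pr) \<noteq> pav_forecast ls pr t0"
proof -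
  obtain t0 where t0: "t0 < length ls" "ws ! t0 \<noteq> pav_solution ls ! t0"
    using ws nth_equalityI[of ws "pav_solution ls"] by (auto simp: feasible_def pav_solution_def)
  then have "sigm (ws ! t0 + ereal pr) \<noteq> sigm (pav_solution ls ! t0 + ereal pr)"
    using sigm_plus_ereal_inj by blast
  with t0 show ?thesis
    using that sigm_pav_solution[OF c t0(1)] by simp
qed

lemma Jobj_pav_solution:
  assumes c: "count_list ls Th1 \<ge> 1" "count_list ls Th2 \<ge> 1" and "sets rho = sets borel"
  shows "Jobj rho pr ls (pav_solution ls) = (\<integral>\<^sup>+x. Jobj_density ls pr (pav_forecast ls pr) x \<partial>rho)"
proof -
  have "Jobj_density ls pr (\<lambda>t. sigm (pav_solution ls ! t + ereal pr)) = Jobj_density ls pr (pav_forecast ls pr)"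
    unfolding Jobj_density_def by (intro ext sum.cong refl) (simp add: sigm_pav_solution[OF c])
  then show ?thesis
    using Jobj_eq_nn_integral[OF assms(3)] by simp
qed

lemma score_density_le:
  shows "0 < q \<Longrightarrow> score_density Th1 q x \<le> ennreal (1 / q)"
    and "q < 1 \<Longrightarrow> score_density Th2 q x \<le> ennreal (1 / (1 - q))"
  by (auto simp: score_density_def indicator_def inverse_ennreal divide_inverse
      intro!: ennreal_leI le_imp_inverse_le)

lemma Crho_finite:
  assumes "prob_space rho" and "l = Th1 \<Longrightarrow> 0 < q" and "l = Th2 \<Longrightarrow> q < 1"
  shows "Crho rho l q \<noteq> \<infinity>"
proof -
  obtain c where "\<And>x. score_density l q x \<le> ennreal c"
    using score_density_le assms(2,3) by (cases l) blast+
  then have "Crho rho l q \<le> (\<integral>\<^sup>+x. ennreal c \<partial>rho)"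
    unfolding Crho_eq_nn_integral by (intro nn_integral_mono)
  also have "\<dots> = ennreal c"
    using prob_space.emeasure_space_1[OF assms(1)] by simp
  finally show ?thesis
    using neq_top_trans[OF ennreal_neq_top] by auto
qed

lemma Jobj_pav_solution_finite:
  assumes c: "count_list ls Th1 \<ge> 1" "count_list ls Th2 \<ge> 1" and "prob_space rho"
  shows "Jobj rho pr ls (pav_solution ls) \<noteq> \<infinity>"
proof -
  have "Crho rho (ls ! t) (pav_forecast ls pr t) \<noteq> \<infinity>" if t: "t < length ls" for t
  proof (rule Crho_finite[OF assms(3)])
    show "0 < pav_forecast ls pr t" if "ls ! t = Th1"
      using reweight_pos[OF lweight_pos[OF c] PAV_pos[OF t that] PAV_bounds(2)[OF t]]
      by (simp add: pav_forecast_def)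
    show "pav_forecast ls pr t < 1" if "ls ! t = Th2"
      using reweight_less_one[OF lweight_pos[OF c] PAV_bounds(1)[OF t] PAV_less_one[OF t that]]
      by (simp add: pav_forecast_def)
  qed
  then show ?thesis
    by (simp add: Jobj_def sigm_pav_solution[OF c] ennreal_sum_eq_top ennreal_mult_eq_top_iff)
qed

lemma pav_solution_minimizer:
  assumes c: "count_list ls Th1 \<ge> 1" "count_list ls Th2 \<ge> 1" and "rbpsr_dist rho"
  shows "is_minimizer rho pr ls (pav_solution ls)"
  unfolding is_minimizer_def
proof (intro conjI allI impI pav_solution_feasible)
  fix ws
  assume "feasible (length ls) ws"
  then have "Jobj_density ls pr (pav_forecast ls pr) x \<le> Jobj_density ls pr (\<lambda>t. sigm (ws ! t + ereal pr)) x" for x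
    by (intro Jobj_density_pav_forecast_le[OF c] feasible_forecast_mono) (simp_all add: sigm_bounds)
  moreover have s: "sets rho = sets borel"
    using assms(3) by (simp add: rbpsr_dist_def)
  ultimately show "Jobj rho pr ls (pav_solution ls) \<le> Jobj rho pr ls ws"
    unfolding Jobj_pav_solution[OF c s] Jobj_eq_nn_integral[OF s, of pr ls ws]
    by (intro nn_integral_mono)
qed

lemma nn_integral_less_of_pos_measure:
  assumes [measurable]: "f \<in> borel_measurable M" "g \<in> borel_measurable M"
    and fin: "(\<integral>\<^sup>+x. f x \<partial>M) \<noteq> \<infinity>" and le: "\<And>x. f x \<le> g x"
    and S: "S \<in> sets M" "0 < emeasure M S" and less: "\<And>x. x \<in> S \<Longrightarrow> f x < g x"
  shows "(\<integral>\<^sup>+x. f x \<partial>M) < (\<integral>\<^sup>+x. g x \<partial>M)"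
proof (rule nn_integral_less[OF assms(1,2) fin])
  show "AE x in M. f x \<le> g x"
    using le by simp
  show "\<not> (AE x in M. g x \<le> f x)"
  proof
    assume "AE x in M. g x \<le> f x"
    then have "AE x in M. x \<notin> S"
      by eventually_elim (use less in force)
    with S have "S \<in> null_sets M"
      by (simp add: AE_iff_null_sets)
    with S show False
      by (simp add: null_setsD1)
  qed
qed

lemma interval_avoiding_finite_set:
  fixes lo hi :: real
  assumes "finite S" "lo < hi"
  obtains b where "lo < b" "b \<le> hi" "\<forall>s\<in>S. s \<notin> {lo<..<b}"
proof
  let ?B = "insert hi {s\<in>S. lo < s}"
  have "finite ?B"
    using assms by simp
  then show "lo < Min ?B" "Min ?B \<le> hi" "\<forall>s\<in>S. s \<notin> {lo<..<Min ?B}"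
    using assms by auto
qed

lemma Jobj_density_less_on_interval:
  assumes c: "count_list ls Th1 \<ge> 1" "count_list ls Th2 \<ge> 1"
    and mono: "\<And>s t. s \<le> t \<Longrightarrow> t < length ls \<Longrightarrow> q s \<le> q t"
    and q: "\<forall>t<length ls. 0 \<le> q t \<and> q t \<le> 1"
    and t0: "t0 < length ls" "q t0 \<noteq> pav_forecast ls pr t0"
  obtains lo b where "0 \<le> lo" "lo < b" "b \<le> 1"
    "\<And>x. x \<in> {lo<..<b} \<Longrightarrow> Jobj_density ls pr (pav_forecast ls pr) x < Jobj_density ls pr q x"
proof -
  define lo where "lo = min (q t0) (pav_forecast ls pr t0)"
  define hi where "hi = max (q t0) (pav_forecast ls pr t0)"
  have lo_hi: "0 \<le> lo" "lo < hi" "hi \<le> 1"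
    using q t0 pav_forecast_bounds[OF c t0(1)] by (auto simp: lo_def hi_def)
  obtain b where b: "lo < b" "b \<le> hi"
    and avoid: "\<forall>s\<in>pav_forecast ls pr ` {..<length ls}. s \<notin> {lo<..<b}"
    using interval_avoiding_finite_set[OF finite_imageI[OF finite_lessThan] lo_hi(2)] .
  show ?thesis
  proof (rule that[OF lo_hi(1) b(1) order_trans[OF b(2) lo_hi(3)]])
    fix x
    assume x: "x \<in> {lo<..<b}"
    show "Jobj_density ls pr (pav_forecast ls pr) x < Jobj_density ls pr q x"
    proof (rule Jobj_density_pav_forecast_less[OF c mono q _ _ _ t0(1)])
      show "0 < x" "x < 1"
        using x b lo_hi by auto
      show "\<forall>t<length ls. pav_forecast ls pr t \<noteq> x"
        using avoid x by auto
      show "(q t0 \<le> x) \<noteq> (pav_forecast ls pr t0 \<le> x)"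
        using x b by (auto simp: lo_def hi_def)
    qed
  qed
qed

lemma Jobj_pav_solution_less:
  assumes c: "count_list ls Th1 \<ge> 1" "count_list ls Th2 \<ge> 1"
    and rho: "rbpsr_dist rho" "full_support rho"
    and ws: "feasible (length ls) ws" "ws \<noteq> pav_solution ls"
  shows "Jobj rho pr ls (pav_solution ls) < Jobj rho pr ls ws"
proof -
  have s: "sets rho = sets borel" and ps: "prob_space rho"
    using rho(1) by (simp_all add: rbpsr_dist_def)
  define q where "q t = sigm (ws ! t + ereal pr)" for t
  obtain t0 where t0: "t0 < length ls" "q t0 \<noteq> pav_forecast ls pr t0"
    using feasible_forecast_ne_pav_forecast[OF c ws] by (auto simp: q_def)
  moreover have mono: "\<And>s t. s \<le> t \<Longrightarrow> t < length ls \<Longrightarrow> q s \<le> q t"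
    using feasible_forecast_mono[OF ws(1)] by (simp add: q_def)
  moreover have bounds: "\<forall>t<length ls. 0 \<le> q t \<and> q t \<le> 1"
    by (simp add: q_def sigm_bounds)
  ultimately obtain lo b where lo_b: "0 \<le> lo" "lo < b" "b \<le> 1"
    and less: "\<And>x. x \<in> {lo<..<b} \<Longrightarrow> Jobj_density ls pr (pav_forecast ls pr) x < Jobj_density ls pr q x"
    using Jobj_density_less_on_interval[OF c _ _ t0(1)] by blast
  have [measurable]: "Jobj_density ls pr q' \<in> borel_measurable rho" for q'
    by (subst measurable_cong_sets[OF s refl]) simp
  have "(\<integral>\<^sup>+x. Jobj_density ls pr (pav_forecast ls pr) x \<partial>rho) < (\<integral>\<^sup>+x. Jobj_density ls pr q x \<partial>rho)"
  proof (rule nn_integral_less_of_pos_measure[OF _ _ _ _ _ _ less])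
    show "(\<integral>\<^sup>+x. Jobj_density ls pr (pav_forecast ls pr) x \<partial>rho) \<noteq> \<infinity>"
      using Jobj_pav_solution_finite[OF c ps] Jobj_pav_solution[OF c s] by simp
    show "Jobj_density ls pr (pav_forecast ls pr) x \<le> Jobj_density ls pr q x" for x
      using Jobj_density_pav_forecast_le[OF c mono bounds] .
    show "{lo<..<b} \<in> sets rho" "0 < emeasure rho {lo<..<b}"
      using s rho(2) lo_b by (simp_all add: full_support_def)
  qed simp_all
  then show ?thesis
    unfolding Jobj_pav_solution[OF c s] Jobj_eq_nn_integral[OF s, of pr ls ws] q_def .
qed

lemma pav_solution_unique:
  assumes c: "count_list ls Th1 \<ge> 1" "count_list ls Th2 \<ge> 1"
    and rho: "rbpsr_dist rho" "full_support rho" and min: "is_minimizer rho pr ls ws"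
  shows "ws = pav_solution ls"
proof (rule ccontr)
  assume "ws \<noteq> pav_solution ls"
  with min have "Jobj rho pr ls (pav_solution ls) < Jobj rho pr ls ws"
    by (intro Jobj_pav_solution_less[OF c rho]) (simp add: is_minimizer_def)
  with min pav_solution_feasible show False
    unfolding is_minimizer_def by (meson leD)
qed

theorem theorem5p1:
  fixes ls :: "label list"
  assumes "count_list ls Th1 \<ge> 1" and "count_list ls Th2 \<ge> 1"
  shows "(\<forall>rho pr. rbpsr_dist rho \<longrightarrow> is_minimizer rho pr ls (pav_solution ls))
       \<and> (\<forall>rho pr ws. rbpsr_dist rho \<and> full_support rho \<and> is_minimizer rho pr ls ws
             \<longrightarrow> ws = pav_solution ls)"
  using pav_solution_minimizer[OF assms] pav_solution_unique[OF assms] by blast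

end
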